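(* If $G$ is a band, then $\chi(G)\le\lceil\frac54\omega(G)\rceil$.
   Context: Two disjoint sets $P,R$ form a graded pair if for any $p,p'\in P$, $N(p)\cap R\subseteq N(p')\cap R$ or $N(p')\cap R\subseteq N(p)\cap R$. A band is a graph whose vertex set is partitioned into seven sets $Q_1,\dots,Q_5,R_2,R_3$ such that: each is a clique; $Q_5$ is complete to $Q_1\cup Q_4$, $R_2$ is complete to $Q_1\cup Q_2\cup Q_3$, $R_3$ is complete to $Q_2\cup Q_3\cup Q_4$, $Q_2$ is complete to $Q_3$; $Q_1$ is anticomplete to $Q_3\cup R_3\cup Q_4$, $Q_4$ is anticomplete to $Q_1\cup Q_2\cup R_2$, $Q_5$ is anticomplete to $Q_2\cup R_2\cup Q_3\cup R_3$; and the pairs $\{Q_1,Q_2\}$, $\{Q_3,Q_4\}$, $\{R_2,R_3\}$ are graded. Complete/anticomplete: all edges / no edges between the sets. *)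

theory Defs
  imports Complex_Main
begin

definition simple_graph :: "'a set \<Rightarrow> ('a \<Rightarrow> 'a \<Rightarrow> bool) \<Rightarrow> bool" where
  "simple_graph V E \<longleftrightarrow> finite V \<and> (\<forall>x y. E x y \<longrightarrow> x \<in> V \<and> y \<in> V)
     \<and> (\<forall>x y. E x y \<longrightarrow> E y x) \<and> (\<forall>x. \<not> E x x)"

definition is_clique :: "('a \<Rightarrow> 'a \<Rightarrow> bool) \<Rightarrow> 'a set \<Rightarrow> bool" where
  "is_clique E K \<longleftrightarrow> (\<forall>x\<in>K. \<forall>y\<in>K. x \<noteq> y \<longrightarrow> E x y)"

definition complete_to :: "('a \<Rightarrow> 'a \<Rightarrow> bool) \<Rightarrow> 'a set \<Rightarrow> 'a set \<Rightarrow> bool" where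
  "complete_to E A B \<longleftrightarrow> (\<forall>a\<in>A. \<forall>b\<in>B. E a b)"

definition anticomplete_to :: "('a \<Rightarrow> 'a \<Rightarrow> bool) \<Rightarrow> 'a set \<Rightarrow> 'a set \<Rightarrow> bool" where
  "anticomplete_to E A B \<longleftrightarrow> (\<forall>a\<in>A. \<forall>b\<in>B. \<not> E a b)"

definition nbhd :: "('a \<Rightarrow> 'a \<Rightarrow> bool) \<Rightarrow> 'a \<Rightarrow> 'a set" where
  "nbhd E v = {u. E v u}"

definition graded :: "('a \<Rightarrow> 'a \<Rightarrow> bool) \<Rightarrow> 'a set \<Rightarrow> 'a set \<Rightarrow> bool" where
  "graded E P R \<longleftrightarrow> P \<inter> R = {} \<and>
     (\<forall>p\<in>P. \<forall>p'\<in>P. nbhd E p \<inter> R \<subseteq> nbhd E p' \<inter> R \<or> nbhd E p' \<inter> R \<subseteq> nbhd E p \<inter> R)"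

definition is_band :: "'a set \<Rightarrow> ('a \<Rightarrow> 'a \<Rightarrow> bool) \<Rightarrow> bool" where
  "is_band V E \<longleftrightarrow> (\<exists>Q1 Q2 Q3 Q4 Q5 R2 R3.
     V = Q1 \<union> Q2 \<union> Q3 \<union> Q4 \<union> Q5 \<union> R2 \<union> R3 \<and>
     Q1 \<inter> Q2 = {} \<and> Q1 \<inter> Q3 = {} \<and> Q1 \<inter> Q4 = {} \<and> Q1 \<inter> Q5 = {} \<and> Q1 \<inter> R2 = {} \<and> Q1 \<inter> R3 = {} \<and>
     Q2 \<inter> Q3 = {} \<and> Q2 \<inter> Q4 = {} \<and> Q2 \<inter> Q5 = {} \<and> Q2 \<inter> R2 = {} \<and> Q2 \<inter> R3 = {} \<and>
     Q3 \<inter> Q4 = {} \<and> Q3 \<inter> Q5 = {} \<and> Q3 \<inter> R2 = {} \<and> Q3 \<inter> R3 = {} \<and>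
     Q4 \<inter> Q5 = {} \<and> Q4 \<inter> R2 = {} \<and> Q4 \<inter> R3 = {} \<and>
     Q5 \<inter> R2 = {} \<and> Q5 \<inter> R3 = {} \<and> R2 \<inter> R3 = {} \<and>
     is_clique E Q1 \<and> is_clique E Q2 \<and> is_clique E Q3 \<and> is_clique E Q4 \<and> is_clique E Q5 \<and>
     is_clique E R2 \<and> is_clique E R3 \<and>
     complete_to E Q5 (Q1 \<union> Q4) \<and>
     complete_to E R2 (Q1 \<union> Q2 \<union> Q3) \<and>
     complete_to E R3 (Q2 \<union> Q3 \<union> Q4) \<and>
     complete_to E Q2 Q3 \<and>
     anticomplete_to E Q1 (Q3 \<union> R3 \<union> Q4) \<and>
     anticomplete_to E Q4 (Q1 \<union> Q2 \<union> R2) \<and>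
     anticomplete_to E Q5 (Q2 \<union> R2 \<union> Q3 \<union> R3) \<and>
     graded E Q1 Q2 \<and> graded E Q3 Q4 \<and> graded E R2 R3)"

definition proper_colouring :: "'a set \<Rightarrow> ('a \<Rightarrow> 'a \<Rightarrow> bool) \<Rightarrow> nat \<Rightarrow> ('a \<Rightarrow> nat) \<Rightarrow> bool" where
  "proper_colouring V E k c \<longleftrightarrow> (\<forall>v\<in>V. c v < k) \<and> (\<forall>u\<in>V. \<forall>v\<in>V. E u v \<longrightarrow> c u \<noteq> c v)"

definition chromatic_number :: "'a set \<Rightarrow> ('a \<Rightarrow> 'a \<Rightarrow> bool) \<Rightarrow> nat" where
  "chromatic_number V E = (LEAST k. \<exists>c. proper_colouring V E k c)"

definition clique_number :: "'a set \<Rightarrow> ('a \<Rightarrow> 'a \<Rightarrow> bool) \<Rightarrow> nat" where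
  "clique_number V E = Max {card K | K. K \<subseteq> V \<and> is_clique E K}"

end

theory Submission
  imports Defs
begin

text \<open>Colours are residues modulo \<open>k = \<lceil>5\<omega>/4\<rceil>\<close>, and every part of the band is
  coloured injectively by an arc of consecutive residues; the arcs follow the cyclic order
  \<open>Q5, Q1, Q2, R2, R3, Q3, Q4\<close>. Parts that are complete to each other get disjoint arcs,
  anticomplete parts may share colours freely, and in each graded pair \<open>(Q1, Q2)\<close>,
  \<open>(R2, R3)\<close>, \<open>(Q3, Q4)\<close> a colour may be shared by the two ends of a non-edge of a fixed
  matching. For a graded pair of cliques the neighbourhoods form a chain, which gives a
  Koenig-type duality: the maximum matching of non-edges and the maximum clique together
  cover both cliques. Adding the cliques \<open>R2\<close>, \<open>Q2 \<union> Q3\<close>, \<open>R3\<close> that are complete to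
  these pairs, the matchings are large enough for the seven arcs to fit around a circle of
  length \<open>k\<close> once \<open>5\<omega> \<le> 4k\<close>.\<close>

section \<open>Arcs of residues\<close>

text \<open>The \<open>l\<close> consecutive residues modulo \<open>k\<close> starting at \<open>s\<close>; the start is an integer so
  that arcs may run past \<open>k\<close> and wrap around.\<close>
definition arc :: "nat \<Rightarrow> int \<Rightarrow> nat \<Rightarrow> nat set" where
  "arc k s l = (\<lambda>i. nat (i mod int k)) ` {s..<s + int l}"

lemma inj_on_mod_window: "inj_on (\<lambda>i. nat (i mod int k)) {s..<s + int k}"
proof (rule inj_onI)
  fix i j assume i: "i \<in> {s..<s + int k}" and j: "j \<in> {s..<s + int k}"
    and eq: "nat (i mod int k) = nat (j mod int k)"
  have "0 < k"
    using i by simp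
  with eq have "int k dvd i - j"
    by (simp add: eq_nat_nat_iff mod_eq_dvd_iff)
  moreover have "\<bar>i - j\<bar> < int k"
    using i j by auto
  ultimately show "i = j"
    using dvd_imp_le_int[of "i - j" "int k"] by linarith
qed

lemma arc_subset_lessThan:
  assumes "l \<le> k"
  shows "arc k s l \<subseteq> {..<k}"
proof (cases "k = 0")
  case True
  with assms show ?thesis
    unfolding arc_def by simp
next
  case False
  then show ?thesis
    unfolding arc_def by (auto simp: nat_less_iff)
qed

lemma card_arc:
  assumes "l \<le> k"
  shows "card (arc k s l) = l"
proof -
  have "inj_on (\<lambda>i. nat (i mod int k)) {s..<s + int l}"
    by (rule inj_on_subset[OF inj_on_mod_window]) (use assms in auto)
  then show ?thesis
    unfolding arc_def by (simp add: card_image)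
qed

lemma arc_Int:
  assumes "l \<le> k" "s \<le> t" "t + int l' \<le> s + int k"
  shows "arc k s l \<inter> arc k t l' = (\<lambda>i. nat (i mod int k)) ` ({s..<s + int l} \<inter> {t..<t + int l'})"
  unfolding arc_def by (rule inj_on_image_Int[OF inj_on_mod_window, symmetric]) (use assms in auto)

lemma arc_disjoint:
  assumes "s + int l \<le> t" "t + int l' \<le> s + int k"
  shows "arc k s l \<inter> arc k t l' = {}"
  using arc_Int[of l k s t l'] assms by auto

lemma card_arc_Int_le:
  assumes "l \<le> k" "s \<le> t" "t + int l' \<le> s + int k"
  shows "card (arc k s l \<inter> arc k t l') \<le> nat (s + int l - t)"
proof -
  have "card (arc k s l \<inter> arc k t l') \<le> card ({s..<s + int l} \<inter> {t..<t + int l'})"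
    unfolding arc_Int[OF assms] by (rule card_image_le) simp
  also have "\<dots> \<le> card {t..<s + int l}"
    by (rule card_mono) auto
  finally show ?thesis
    by simp
qed

lemma arc_add_period: "arc k (s + int k) l = arc k s l"
proof -
  have shift: "{s + int k..<s + int k + int l} = (\<lambda>i. i + int k) ` {s..<s + int l}"
    by (simp add: algebra_simps)
  show ?thesis
    unfolding arc_def shift image_image by simp
qed

text \<open>Starts of the arcs of \<open>Q1\<close>, \<open>Q2\<close>, \<open>R3\<close>, \<open>Q4\<close>, with \<open>Q5\<close> at \<open>0\<close>, \<open>R2\<close> right after \<open>Q2\<close>
  and \<open>Q3\<close> right after \<open>R3\<close>; they are chosen greedily from \<open>x4\<close> backwards, and
  \<open>5w \<le> 4k\<close> makes the arc of \<open>Q4\<close> end before that of \<open>Q5\<close> recurs at \<open>2k\<close>.\<close>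
lemma arc_positions:
  fixes q1 q2 q3 q4 q5 r2 r3 m1 m2 m3 w k :: int
  assumes "5 * w \<le> 4 * k" "q5 + q1 \<le> w" "q5 + q4 \<le> w"
    "q1 + q2 + r2 \<le> w + m1" "q2 + r2 + r3 + q3 \<le> w + m2" "r3 + q3 + q4 \<le> w + m3"
    "0 \<le> q5" "0 \<le> m1" "m1 \<le> q1" "m1 \<le> q2" "0 \<le> m2" "m2 \<le> r2" "m2 \<le> r3"
    "0 \<le> m3" "m3 \<le> q3" "m3 \<le> q4"
  obtains x1 x2 y3 x4 where
    "q5 \<le> x1" "x1 + q1 \<le> k" "x1 + q1 \<le> x2 + m1" "x2 + q2 + r2 \<le> x1 + k"
    "x2 + q2 + r2 \<le> y3 + m2" "y3 + r3 + q3 \<le> x2 + k" "y3 + r3 + q3 \<le> x4 + m3"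
    "x4 + q4 \<le> y3 + k" "k + q5 \<le> x4" "x4 + q4 \<le> 2 * k"
proof
  define x4 where "x4 = max (q5 + q1 - m1 + q2 + r2 - m2 + r3 + q3 - m3) (k + q5)"
  define y3 where "y3 = max (q5 + q1 - m1 + q2 + r2 - m2) (x4 - k + q4)"
  define x2 where "x2 = max (q5 + q1 - m1) (y3 - k + r3 + q3)"
  define x1 where "x1 = max q5 (x2 - k + q2 + r2)"
  show "q5 \<le> x1" "x2 + q2 + r2 \<le> x1 + k" "y3 + r3 + q3 \<le> x2 + k" "x4 + q4 \<le> y3 + k"
    "k + q5 \<le> x4"
    unfolding x1_def x2_def y3_def x4_def by simp_all
  have x4: "x4 = q5 + q1 - m1 + q2 + r2 - m2 + r3 + q3 - m3 \<or> x4 = k + q5"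
    and y3: "y3 = q5 + q1 - m1 + q2 + r2 - m2 \<or> y3 = x4 - k + q4"
    and x2: "x2 = q5 + q1 - m1 \<or> x2 = y3 - k + r3 + q3"
    and x1: "x1 = q5 \<or> x1 = x2 - k + q2 + r2"
    unfolding x1_def x2_def y3_def x4_def by linarith+
  have "x1 \<ge> q5" "x2 \<ge> q5 + q1 - m1" "y3 \<ge> q5 + q1 - m1 + q2 + r2 - m2"
    "x4 \<ge> q5 + q1 - m1 + q2 + r2 - m2 + r3 + q3 - m3" "y3 \<ge> x4 - k + q4"
    unfolding x1_def x2_def y3_def x4_def by simp_all
  with x1 x2 y3 x4 assms show "x4 + q4 \<le> 2 * k" "y3 + r3 + q3 \<le> x4 + m3" "x2 + q2 + r2 \<le> y3 + m2"
    "x1 + q1 \<le> x2 + m1" "x1 + q1 \<le> k"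
    by linarith+
qed

lemma cyclic_colour_sets:
  fixes q1 q2 q3 q4 q5 r2 r3 m1 m2 m3 w k :: nat
  assumes "5 * w \<le> 4 * k" "q5 + q1 \<le> w" "q5 + q4 \<le> w"
    "q1 + q2 + r2 \<le> w + m1" "q2 + r2 + r3 + q3 \<le> w + m2" "r3 + q3 + q4 \<le> w + m3"
    "m1 \<le> q1" "m1 \<le> q2" "m2 \<le> r2" "m2 \<le> r3" "m3 \<le> q3" "m3 \<le> q4"
  obtains C1 C2 C3 C4 C5 D2 D3 where
    "C1 \<union> C2 \<union> C3 \<union> C4 \<union> C5 \<union> D2 \<union> D3 \<subseteq> {..<k}"
    "card C1 = q1" "card C2 = q2" "card C3 = q3" "card C4 = q4" "card C5 = q5"
    "card D2 = r2" "card D3 = r3"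
    "C5 \<inter> (C1 \<union> C4) = {}" "D2 \<inter> (C1 \<union> C2 \<union> C3) = {}"
    "D3 \<inter> (C2 \<union> C3 \<union> C4) = {}" "C2 \<inter> C3 = {}"
    "card (C1 \<inter> C2) \<le> m1" "card (D2 \<inter> D3) \<le> m2" "card (C3 \<inter> C4) \<le> m3"
proof -
  obtain x1 x2 y3 x4 :: int where x:
    "q5 \<le> x1" "x1 + q1 \<le> k" "x1 + q1 \<le> x2 + m1" "x2 + q2 + r2 \<le> x1 + k"
    "x2 + q2 + r2 \<le> y3 + m2" "y3 + r3 + q3 \<le> x2 + k" "y3 + r3 + q3 \<le> x4 + m3"
    "x4 + q4 \<le> y3 + k" "int k + q5 \<le> x4" "x4 + q4 \<le> 2 * int k"
    by (rule arc_positions[of w k q5 q1 q4 q2 r2 m1 r3 q3 m2 m3]) (use assms in linarith)+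
  have small: "q1 \<le> k" "q2 \<le> k" "q3 \<le> k" "q4 \<le> k" "q5 \<le> k" "r2 \<le> k" "r3 \<le> k"
    using assms by linarith+
  define C1 where "C1 = arc k x1 q1"
  define C2 where "C2 = arc k x2 q2"
  define D2 where "D2 = arc k (x2 + int q2) r2"
  define D3 where "D3 = arc k y3 r3"
  define C3 where "C3 = arc k (y3 + int r3) q3"
  define C4 where "C4 = arc k x4 q4"
  define C5 where "C5 = arc k 0 q5"
  \<comment> \<open>the arcs of \<open>Q4\<close> and \<open>Q5\<close> are compared across the wrap-around\<close>
  have C4_shift: "C4 = arc k (x4 - k) q4" and C5_shift: "C5 = arc k k q5"
    using arc_add_period[of k "x4 - k" q4] arc_add_period[of k 0 q5]
    by (simp_all add: C4_def C5_def)
  show thesis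
  proof
    show "C1 \<union> C2 \<union> C3 \<union> C4 \<union> C5 \<union> D2 \<union> D3 \<subseteq> {..<k}"
      unfolding C1_def C2_def C3_def C4_def C5_def D2_def D3_def
      using small by (simp add: arc_subset_lessThan)
    show "card C1 = q1" "card C2 = q2" "card C3 = q3" "card C4 = q4" "card C5 = q5"
      "card D2 = r2" "card D3 = r3"
      unfolding C1_def C2_def C3_def C4_def C5_def D2_def D3_def
      using small by (simp_all add: card_arc)
    have "C4 \<inter> C5 = {}"
      unfolding C4_shift C5_shift by (rule arc_disjoint) (use x in linarith)+
    moreover have "C5 \<inter> C1 = {}" "C1 \<inter> D2 = {}" "C2 \<inter> D2 = {}" "D2 \<inter> C3 = {}"
      "C2 \<inter> D3 = {}" "D3 \<inter> C3 = {}" "D3 \<inter> C4 = {}" "C2 \<inter> C3 = {}"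
      unfolding C1_def C2_def C3_def D2_def D3_def C4_def C5_def
      by (rule arc_disjoint; use x assms in linarith)+
    ultimately show "C5 \<inter> (C1 \<union> C4) = {}" "D2 \<inter> (C1 \<union> C2 \<union> C3) = {}"
      "D3 \<inter> (C2 \<union> C3 \<union> C4) = {}" "C2 \<inter> C3 = {}"
      by blast+
    have "card (C1 \<inter> C2) \<le> nat (x1 + q1 - x2)"
      unfolding C1_def C2_def by (rule card_arc_Int_le) (use x assms small in linarith)+
    moreover have "card (D2 \<inter> D3) \<le> nat (x2 + q2 + r2 - y3)"
      unfolding D2_def D3_def by (rule card_arc_Int_le) (use x assms small in linarith)+
    moreover have "card (C3 \<inter> C4) \<le> nat (y3 + r3 + q3 - x4)"
      unfolding C3_def C4_def by (rule card_arc_Int_le) (use x assms small in linarith)+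
    ultimately show "card (C1 \<inter> C2) \<le> m1" "card (D2 \<inter> D3) \<le> m2" "card (C3 \<inter> C4) \<le> m3"
      using x by linarith+
  qed
qed

section \<open>Graded pairs of cliques\<close>

definition nonedge_matching :: "('a \<Rightarrow> 'a \<Rightarrow> bool) \<Rightarrow> 'a set \<Rightarrow> 'a set \<Rightarrow> 'a set \<Rightarrow> ('a \<Rightarrow> 'a) \<Rightarrow> bool" where
  "nonedge_matching E P R M \<mu> \<longleftrightarrow> M \<subseteq> P \<and> inj_on \<mu> M \<and> \<mu> ` M \<subseteq> R \<and> (\<forall>p\<in>M. \<not> E p (\<mu> p))"

lemma nonedge_matching_insert:
  assumes "nonedge_matching E P R' M \<mu>" "R' \<subseteq> R" "p \<in> P - M" "r \<in> R - R'" "\<not> E p r"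
  shows "nonedge_matching E P R (insert p M) (\<mu>(p := r))"
  using assms unfolding nonedge_matching_def by (auto simp: inj_on_def)

lemma is_clique_insert:
  assumes "symp E" "is_clique E K" "\<And>x. x \<in> K \<Longrightarrow> x \<noteq> p \<Longrightarrow> E p x"
  shows "is_clique E (insert p K)"
  using assms unfolding is_clique_def by (auto dest: sympD)

lemma is_clique_subset: "is_clique E K \<Longrightarrow> K' \<subseteq> K \<Longrightarrow> is_clique E K'"
  unfolding is_clique_def by blast

lemma is_clique_Un:
  assumes "symp E" "is_clique E A" "is_clique E B" "complete_to E A B"
  shows "is_clique E (A \<union> B)"
  using assms unfolding is_clique_def complete_to_def symp_def by blast

lemma graded_mono: "graded E P R \<Longrightarrow> P' \<subseteq> P \<Longrightarrow> R' \<subseteq> R \<Longrightarrow> graded E P' R'"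
  unfolding graded_def by blast

lemma graded_common_nonneighbour:
  assumes "graded E P R" "finite P" "P \<noteq> {}" "\<forall>p\<in>P. \<exists>r\<in>R. \<not> E p r"
  shows "\<exists>r\<in>R. \<forall>p\<in>P. \<not> E p r"
proof -
  let ?N = "(\<lambda>p. nbhd E p \<inter> R) ` P"
  have "subset.chain UNIV ?N"
    using assms(1) unfolding graded_def subset_chain_def by auto
  then have "\<Union>?N \<in> ?N"
    using assms(2,3) by (intro Union_in_chain) auto
  then obtain p where "p \<in> P" "\<Union>?N = nbhd E p \<inter> R"
    by auto
  moreover from this obtain r where "r \<in> R" "\<not> E p r"
    using assms(4) by blast
  ultimately show ?thesis
    unfolding nbhd_def by blast
qed

text \<open>The two sides of Koenig's theorem for the bipartite complement of the cliques \<open>P\<close> and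
  \<open>R\<close>: a clique and a matching of non-edges whose sizes add up to at least \<open>|P| + |R|\<close>.\<close>
definition koenig_pair :: "('a \<Rightarrow> 'a \<Rightarrow> bool) \<Rightarrow> 'a set \<Rightarrow> 'a set \<Rightarrow> bool" where
  "koenig_pair E P R \<longleftrightarrow> (\<exists>M \<mu> K. nonedge_matching E P R M \<mu> \<and> K \<subseteq> P \<union> R \<and> is_clique E K \<and>
     card P + card R \<le> card K + card M)"

lemma koenig_pair_empty: "is_clique E R \<Longrightarrow> koenig_pair E {} R"
  unfolding koenig_pair_def nonedge_matching_def by (intro exI[of _ "{}"] exI[of _ R]) auto

lemma koenig_pair_insert_complete:
  assumes "koenig_pair E (P - {p}) R" "symp E" "finite P" "finite R" "P \<inter> R = {}" "is_clique E P"
    "p \<in> P" "\<forall>r\<in>R. E p r"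
  shows "koenig_pair E P R"
proof -
  obtain M \<mu> K where M: "nonedge_matching E (P - {p}) R M \<mu>" and K: "K \<subseteq> P - {p} \<union> R"
    "is_clique E K" "card (P - {p}) + card R \<le> card K + card M"
    using assms(1) unfolding koenig_pair_def by blast
  have "nonedge_matching E P R M \<mu>"
    using M unfolding nonedge_matching_def by blast
  moreover have "is_clique E (insert p K)"
    using K(1,2) assms(6-8) by (intro is_clique_insert[OF assms(2)]) (auto simp: is_clique_def)
  moreover have "p \<notin> K" "finite K"
    using K(1) assms(3-5,7) by (auto intro: finite_subset)
  ultimately show ?thesis
    unfolding koenig_pair_def using K assms(3,7)
    by (intro exI[of _ M] exI[of _ \<mu>] exI[of _ "insert p K"]) (auto simp: card_Diff_singleton)
qed

lemma koenig_pair_insert_nonneighbour: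
  assumes "koenig_pair E P (R - {r})" "finite P" "finite R" "is_clique E R"
    "r \<in> R" "\<forall>p\<in>P. \<not> E p r"
  shows "koenig_pair E P R"
proof -
  obtain M \<mu> K where M: "nonedge_matching E P (R - {r}) M \<mu>" and K: "K \<subseteq> P \<union> (R - {r})"
    "is_clique E K" "card P + card (R - {r}) \<le> card K + card M"
    using assms(1) unfolding koenig_pair_def by blast
  have card_R: "card (R - {r}) + 1 = card R"
    using assms(3,5) by (metis card_Suc_Diff1 Suc_eq_plus1)
  show ?thesis
  proof (cases "M = P")
    case True
    then show ?thesis
      using M assms(4) unfolding koenig_pair_def nonedge_matching_def
      by (intro exI[of _ M] exI[of _ \<mu>] exI[of _ R]) auto
  next
    case False
    then obtain p where p: "p \<in> P - M"
      using M unfolding nonedge_matching_def by blast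
    have "nonedge_matching E P R (insert p M) (\<mu>(p := r))"
      using nonedge_matching_insert[OF M, of R p r] p assms(5,6) by blast
    moreover have "card (insert p M) = card M + 1"
      using M p assms(2) finite_subset unfolding nonedge_matching_def by fastforce
    ultimately show ?thesis
      unfolding koenig_pair_def using K card_R
      by (intro exI[of _ "insert p M"] exI[of _ "\<mu>(p := r)"] exI[of _ K]) auto
  qed
qed

lemma koenig_graded_cliques:
  assumes "symp E"
  shows "finite P \<Longrightarrow> finite R \<Longrightarrow> is_clique E P \<Longrightarrow> is_clique E R \<Longrightarrow> graded E P R \<Longrightarrow>
    koenig_pair E P R"
proof (induction "card P + card R" arbitrary: P R rule: less_induct)
  case less
  consider "P = {}" | p where "p \<in> P" "\<forall>r\<in>R. E p r"
    | r where "r \<in> R" "\<forall>p\<in>P. \<not> E p r"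
    using graded_common_nonneighbour[OF less.prems(5,1)] by metis
  then show ?case
  proof cases
    case 1
    then show ?thesis
      using koenig_pair_empty less.prems(4) by blast
  next
    case (2 p)
    have "card (P - {p}) + card R < card P + card R"
      using card_Diff1_less[OF less.prems(1) 2(1)] by simp
    moreover have "is_clique E (P - {p})" "graded E (P - {p}) R"
      using is_clique_subset[OF less.prems(3)] graded_mono[OF less.prems(5)] by auto
    ultimately have IH: "koenig_pair E (P - {p}) R"
      using less.hyps[of "P - {p}" R] less.prems(1,2,4) by simp
    have "P \<inter> R = {}"
      using less.prems(5) unfolding graded_def by blast
    from koenig_pair_insert_complete[OF IH assms less.prems(1,2) this less.prems(3) 2]
    show ?thesis .
  next
    case (3 r)
    have "card P + card (R - {r}) < card P + card R"
      using card_Diff1_less[OF less.prems(2) 3(1)] by simp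
    moreover have "is_clique E (R - {r})" "graded E P (R - {r})"
      using is_clique_subset[OF less.prems(4)] graded_mono[OF less.prems(5)] by auto
    ultimately have IH: "koenig_pair E P (R - {r})"
      using less.hyps[of P "R - {r}"] less.prems(1-3) by simp
    from koenig_pair_insert_nonneighbour[OF IH less.prems(1,2,4) 3]
    show ?thesis .
  qed
qed

lemma card_Un_le_clique_bound:
  assumes "symp E" "finite A" "finite B" "A \<inter> B = {}" "is_clique E A" "is_clique E B"
    "complete_to E A B" "A \<union> B \<subseteq> U" "\<And>K. K \<subseteq> U \<Longrightarrow> is_clique E K \<Longrightarrow> card K \<le> w"
  shows "card A + card B \<le> w"
  using assms(9)[OF assms(8) is_clique_Un[OF assms(1,5-7)]] card_Un_disjoint[OF assms(2-4)] by simp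

lemma nonedge_matching_card_le:
  assumes "nonedge_matching E P R M \<mu>" "finite P" "finite R"
  shows "card M \<le> card P" "card M \<le> card R"
proof -
  have "M \<subseteq> P" "inj_on \<mu> M" "\<mu> ` M \<subseteq> R"
    using assms(1) unfolding nonedge_matching_def by auto
  then show "card M \<le> card P" "card M \<le> card R"
    using assms(2,3) card_mono card_inj_on_le by blast+
qed

lemma koenig_matching_bound:
  assumes "symp E" "finite P" "finite R" "is_clique E P" "is_clique E R" "graded E P R"
    "finite C" "is_clique E C" "complete_to E C (P \<union> R)" "C \<inter> (P \<union> R) = {}"
    "C \<union> (P \<union> R) \<subseteq> U" "\<And>K. K \<subseteq> U \<Longrightarrow> is_clique E K \<Longrightarrow> card K \<le> w"
  obtains M \<mu> where "nonedge_matching E P R M \<mu>" "card P + card R + card C \<le> w + card M"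
proof -
  obtain M \<mu> K where "nonedge_matching E P R M \<mu>" "K \<subseteq> P \<union> R" "is_clique E K"
    "card P + card R \<le> card K + card M"
    using koenig_graded_cliques[OF assms(1-6)] unfolding koenig_pair_def by blast
  moreover have "card C + card K \<le> w"
    using \<open>K \<subseteq> P \<union> R\<close> assms(2,3,7-11) \<open>is_clique E K\<close>
    by (intro card_Un_le_clique_bound[OF assms(1) _ _ _ _ _ _ _ assms(12)])
      (auto simp: complete_to_def intro: finite_subset)
  ultimately show thesis
    using that by fastforce
qed

section \<open>Colourings\<close>

lemma bij_betw_extend:
  assumes "bij_betw f A B" "A \<subseteq> P" "B \<subseteq> X" "finite P" "finite X" "card P = card X"
  obtains g where "bij_betw g P X" "\<And>x. x \<in> A \<Longrightarrow> g x = f x"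
proof -
  have "finite A" "finite B"
    using assms(2-5) finite_subset by auto
  then have "card (P - A) = card (X - B)"
    using assms(1-3,6) by (simp add: card_Diff_subset bij_betw_same_card)
  then obtain h where "bij_betw h (P - A) (X - B)"
    using finite_same_card_bij assms(4,5) by blast
  from bij_betw_disjoint_Un[OF assms(1) this]
  have "bij_betw (\<lambda>x. if x \<in> A then f x else h x) P X"
    using assms(2,3) by (simp add: Un_absorb1)
  then show thesis
    by (rule that) simp
qed

lemma matched_bijections:
  assumes "finite P" "finite R" "M \<subseteq> P" "inj_on \<mu> M" "\<mu> ` M \<subseteq> R"
    "finite X" "finite Y" "card X = card P" "card Y = card R" "card (X \<inter> Y) \<le> card M"
  obtains cP cR where "bij_betw cP P X" "bij_betw cR R Y"
    "\<And>p r. p \<in> P \<Longrightarrow> r \<in> R \<Longrightarrow> cP p = cR r \<Longrightarrow> p \<in> M \<and> r = \<mu> p"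
proof -
  define S where "S = X \<inter> Y"
  obtain M' where M': "M' \<subseteq> M" "card M' = card S"
    using obtain_subset_with_card_n assms(10) unfolding S_def by metis
  then obtain \<beta> where \<beta>: "bij_betw \<beta> M' S"
    using finite_same_card_bij assms(1,3,6) unfolding S_def by (meson finite_Int finite_subset)
  have \<mu>: "bij_betw \<mu> M' (\<mu> ` M')"
    using M'(1) assms(4) by (simp add: bij_betw_imageI inj_on_subset)
  have \<gamma>: "bij_betw (\<beta> \<circ> inv_into M' \<mu>) (\<mu> ` M') S"
    by (rule bij_betw_trans[OF bij_betw_inv_into[OF \<mu>] \<beta>])
  have "M' \<subseteq> P" "\<mu> ` M' \<subseteq> R" "S \<subseteq> X" "S \<subseteq> Y"
    using M'(1) assms(3,5) unfolding S_def by auto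
  obtain cP where cP: "bij_betw cP P X" "\<And>p. p \<in> M' \<Longrightarrow> cP p = \<beta> p"
    using bij_betw_extend[OF \<beta> \<open>M' \<subseteq> P\<close> \<open>S \<subseteq> X\<close> assms(1,6) assms(8)[symmetric]] by blast
  obtain cR where cR: "bij_betw cR R Y" "\<And>r. r \<in> \<mu> ` M' \<Longrightarrow> cR r = \<beta> (inv_into M' \<mu> r)"
    using bij_betw_extend[OF \<gamma> \<open>\<mu> ` M' \<subseteq> R\<close> \<open>S \<subseteq> Y\<close> assms(2,7) assms(9)[symmetric]] by auto
  have "cP ` M' = S" "cR ` (\<mu> ` M') = S"
    using cP(2) cR(2) bij_betw_imp_surj_on[OF \<beta>] bij_betw_imp_surj_on[OF \<gamma>] by simp_all
  have "p \<in> M \<and> r = \<mu> p" if "p \<in> P" "r \<in> R" "cP p = cR r" for p r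
  proof -
    have "cP p \<in> S"
      using that bij_betw_apply[OF cP(1) that(1)] bij_betw_apply[OF cR(1) that(2)]
      unfolding S_def by simp
    then have "p \<in> M'" "r \<in> \<mu> ` M'"
      using \<open>cP ` M' = S\<close> \<open>cR ` (\<mu> ` M') = S\<close> that \<open>M' \<subseteq> P\<close> \<open>\<mu> ` M' \<subseteq> R\<close>
        inj_on_image_mem_iff[OF bij_betw_imp_inj_on[OF cP(1)]]
        inj_on_image_mem_iff[OF bij_betw_imp_inj_on[OF cR(1)]]
      by metis+
    then have "\<beta> p = \<beta> (inv_into M' \<mu> r)"
      using cP(2) cR(2) that(3) by simp
    then have "p = inv_into M' \<mu> r"
      using bij_betw_imp_inj_on[OF \<beta>] \<open>p \<in> M'\<close> inv_into_into[OF \<open>r \<in> \<mu> ` M'\<close>]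
      by (auto dest: inj_onD)
    then show ?thesis
      using \<open>r \<in> \<mu> ` M'\<close> \<open>p \<in> M'\<close> M'(1) by (auto simp: f_inv_into_f)
  qed
  with cP(1) cR(1) show thesis
    using that by blast
qed

definition properly_coloured_between :: "('a \<Rightarrow> 'a \<Rightarrow> bool) \<Rightarrow> ('a \<Rightarrow> 'b) \<Rightarrow> 'a set \<Rightarrow> 'a set \<Rightarrow> bool" where
  "properly_coloured_between E col X Y \<longleftrightarrow> (\<forall>u\<in>X. \<forall>v\<in>Y. E u v \<longrightarrow> col u \<noteq> col v)"

lemma properly_coloured_between_Un:
  "properly_coloured_between E col (X \<union> Y) Z \<longleftrightarrow>
     properly_coloured_between E col X Z \<and> properly_coloured_between E col Y Z"
  "properly_coloured_between E col Z (X \<union> Y) \<longleftrightarrow>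
     properly_coloured_between E col Z X \<and> properly_coloured_between E col Z Y"
  unfolding properly_coloured_between_def by blast+

lemma properly_coloured_between_sym:
  "symp E \<Longrightarrow> properly_coloured_between E col X Y \<Longrightarrow> properly_coloured_between E col Y X"
  unfolding properly_coloured_between_def symp_def by metis

lemma properly_coloured_between_self:
  "irreflp E \<Longrightarrow> inj_on col X \<Longrightarrow> properly_coloured_between E col X X"
  unfolding properly_coloured_between_def irreflp_def by (metis inj_onD)

lemma properly_coloured_between_disjoint_images:
  "col ` X \<inter> col ` Y = {} \<Longrightarrow> properly_coloured_between E col X Y"
  unfolding properly_coloured_between_def by blast

lemma properly_coloured_between_anticomplete:
  "anticomplete_to E X Y \<Longrightarrow> properly_coloured_between E col X Y"
  unfolding properly_coloured_between_def anticomplete_to_def by blast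

lemma properly_coloured_between_cong:
  "(\<And>x. x \<in> X \<union> Y \<Longrightarrow> c x = d x) \<Longrightarrow>
    properly_coloured_between E c X Y \<longleftrightarrow> properly_coloured_between E d X Y"
  unfolding properly_coloured_between_def by auto

lemma proper_colouring_iff:
  "proper_colouring V E k col \<longleftrightarrow> col ` V \<subseteq> {..<k} \<and> properly_coloured_between E col V V"
  unfolding proper_colouring_def properly_coloured_between_def by auto

lemma colouring_with_shared_colours:
  assumes "finite P" "finite R" "P \<inter> R = {}" "nonedge_matching E P R M \<mu>"
    "finite X" "finite Y" "card X = card P" "card Y = card R" "card (X \<inter> Y) \<le> card M"
  obtains c where "bij_betw c P X" "bij_betw c R Y" "properly_coloured_between E c P R"
proof -
  have M: "M \<subseteq> P" "inj_on \<mu> M" "\<mu> ` M \<subseteq> R" "\<forall>p\<in>M. \<not> E p (\<mu> p)"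
    using assms(4) unfolding nonedge_matching_def by auto
  obtain cP cR where cP: "bij_betw cP P X" and cR: "bij_betw cR R Y"
    and shared: "\<And>p r. p \<in> P \<Longrightarrow> r \<in> R \<Longrightarrow> cP p = cR r \<Longrightarrow> p \<in> M \<and> r = \<mu> p"
    using matched_bijections[OF assms(1,2) M(1-3) assms(5-9)] by blast
  define c where "c x = (if x \<in> P then cP x else cR x)" for x
  have "properly_coloured_between E c P R"
    unfolding properly_coloured_between_def using shared M(4) assms(3) by (auto simp: c_def)
  moreover have "bij_betw c P X"
    using cP by (rule bij_betw_cong[THEN iffD1, rotated]) (simp add: c_def)
  moreover have "bij_betw c R Y"
    using cR by (rule bij_betw_cong[THEN iffD1, rotated]) (use assms(3) in \<open>auto simp: c_def\<close>)
  ultimately show thesis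
    using that by blast
qed

lemma card_le_clique_number:
  assumes "finite V" "K \<subseteq> V" "is_clique E K"
  shows "card K \<le> clique_number V E"
proof -
  have "finite {card K |K. K \<subseteq> V \<and> is_clique E K}"
    using assms(1) by simp
  then show ?thesis
    unfolding clique_number_def using assms(2,3) by (auto intro: Max_ge)
qed

lemma chromatic_number_le: "proper_colouring V E k c \<Longrightarrow> chromatic_number V E \<le> k"
  unfolding chromatic_number_def by (rule Least_le) blast

section \<open>Bands\<close>

locale band =
  fixes V :: "'a set" and E :: "'a \<Rightarrow> 'a \<Rightarrow> bool" and Q1 Q2 Q3 Q4 Q5 R2 R3 :: "'a set"
  assumes graph: "simple_graph V E"
    and parts: "V = Q1 \<union> Q2 \<union> Q3 \<union> Q4 \<union> Q5 \<union> R2 \<union> R3"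
    and disjoint:
      "Q1 \<inter> Q2 = {}" "Q1 \<inter> Q3 = {}" "Q1 \<inter> Q4 = {}" "Q1 \<inter> Q5 = {}" "Q1 \<inter> R2 = {}" "Q1 \<inter> R3 = {}"
      "Q2 \<inter> Q3 = {}" "Q2 \<inter> Q4 = {}" "Q2 \<inter> Q5 = {}" "Q2 \<inter> R2 = {}" "Q2 \<inter> R3 = {}"
      "Q3 \<inter> Q4 = {}" "Q3 \<inter> Q5 = {}" "Q3 \<inter> R2 = {}" "Q3 \<inter> R3 = {}"
      "Q4 \<inter> Q5 = {}" "Q4 \<inter> R2 = {}" "Q4 \<inter> R3 = {}"
      "Q5 \<inter> R2 = {}" "Q5 \<inter> R3 = {}" "R2 \<inter> R3 = {}"
    and cliques: "is_clique E Q1" "is_clique E Q2" "is_clique E Q3" "is_clique E Q4"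
      "is_clique E Q5" "is_clique E R2" "is_clique E R3"
    and complete: "complete_to E Q5 (Q1 \<union> Q4)" "complete_to E R2 (Q1 \<union> Q2 \<union> Q3)"
      "complete_to E R3 (Q2 \<union> Q3 \<union> Q4)" "complete_to E Q2 Q3"
    and anticomplete: "anticomplete_to E Q1 (Q3 \<union> R3 \<union> Q4)"
      "anticomplete_to E Q4 (Q1 \<union> Q2 \<union> R2)" "anticomplete_to E Q5 (Q2 \<union> R2 \<union> Q3 \<union> R3)"
    and graded: "graded E Q1 Q2" "graded E Q3 Q4" "graded E R2 R3"

lemma is_bandE:
  assumes "simple_graph V E" "is_band V E"
  obtains Q1 Q2 Q3 Q4 Q5 R2 R3 where "band V E Q1 Q2 Q3 Q4 Q5 R2 R3"
  using assms unfolding is_band_def band_def by metis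

context band
begin

lemma symp_E: "symp E"
  using graph unfolding simple_graph_def symp_def by blast

lemma irreflp_E: "irreflp E"
  using graph unfolding simple_graph_def irreflp_def by blast

lemma finite_parts:
  "finite Q1" "finite Q2" "finite Q3" "finite Q4" "finite Q5" "finite R2" "finite R3"
  using graph parts unfolding simple_graph_def by (auto intro: finite_subset)

lemma proper_colouringI:
  assumes "col ` V \<subseteq> {..<k}"
    and "inj_on col Q1" "inj_on col Q2" "inj_on col Q3" "inj_on col Q4" "inj_on col Q5"
      "inj_on col R2" "inj_on col R3"
    and "col ` Q5 \<inter> col ` (Q1 \<union> Q4) = {}" "col ` R2 \<inter> col ` (Q1 \<union> Q2 \<union> Q3) = {}"
      "col ` R3 \<inter> col ` (Q2 \<union> Q3 \<union> Q4) = {}" "col ` Q2 \<inter> col ` Q3 = {}"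
    and "properly_coloured_between E col Q1 Q2" "properly_coloured_between E col Q3 Q4"
      "properly_coloured_between E col R2 R3"
  shows "proper_colouring V E k col"
proof -
  note pairs = assms(13-15)
    assms(9-12)[THEN properly_coloured_between_disjoint_images[where E = E]]
    anticomplete[THEN properly_coloured_between_anticomplete]
  have "properly_coloured_between E col V V"
    unfolding parts properly_coloured_between_Un
    using assms(2-8)[THEN properly_coloured_between_self[OF irreflp_E]]
      pairs[unfolded properly_coloured_between_Un]
    by (blast intro: properly_coloured_between_sym[OF symp_E])
  with assms(1) show ?thesis
    unfolding proper_colouring_iff by blast
qed

lemma proper_colouring_from_colour_sets:
  assumes matchings: "nonedge_matching E Q1 Q2 M1 \<mu>1" "nonedge_matching E R2 R3 M2 \<mu>2"
      "nonedge_matching E Q3 Q4 M3 \<mu>3"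
    and range: "C1 \<union> C2 \<union> C3 \<union> C4 \<union> C5 \<union> D2 \<union> D3 \<subseteq> {..<k}"
    and card: "card C1 = card Q1" "card C2 = card Q2" "card C3 = card Q3" "card C4 = card Q4"
      "card C5 = card Q5" "card D2 = card R2" "card D3 = card R3"
    and disjoint_sets: "C5 \<inter> (C1 \<union> C4) = {}" "D2 \<inter> (C1 \<union> C2 \<union> C3) = {}"
      "D3 \<inter> (C2 \<union> C3 \<union> C4) = {}" "C2 \<inter> C3 = {}"
    and overlap: "card (C1 \<inter> C2) \<le> card M1" "card (D2 \<inter> D3) \<le> card M2"
      "card (C3 \<inter> C4) \<le> card M3"
  obtains col where "proper_colouring V E k col"
proof -
  have fin: "finite C1" "finite C2" "finite C3" "finite C4" "finite C5" "finite D2" "finite D3"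
    using range by (auto intro: finite_subset)
  obtain c12 where c12: "bij_betw c12 Q1 C1" "bij_betw c12 Q2 C2"
    "properly_coloured_between E c12 Q1 Q2"
    by (rule colouring_with_shared_colours[OF finite_parts(1,2) disjoint(1) matchings(1)
          fin(1,2) card(1,2) overlap(1)])
  obtain c23 where c23: "bij_betw c23 R2 D2" "bij_betw c23 R3 D3"
    "properly_coloured_between E c23 R2 R3"
    by (rule colouring_with_shared_colours[OF finite_parts(6,7) disjoint(21) matchings(2)
          fin(6,7) card(6,7) overlap(2)])
  obtain c34 where c34: "bij_betw c34 Q3 C3" "bij_betw c34 Q4 C4"
    "properly_coloured_between E c34 Q3 Q4"
    by (rule colouring_with_shared_colours[OF finite_parts(3,4) disjoint(12) matchings(3)
          fin(3,4) card(3,4) overlap(3)])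
  obtain c5 where c5: "bij_betw c5 Q5 C5"
    using finite_same_card_bij[OF finite_parts(5) fin(5) card(5)[symmetric]] by blast
  define col where "col x = (if x \<in> Q1 \<union> Q2 then c12 x else if x \<in> R2 \<union> R3 then c23 x
    else if x \<in> Q3 \<union> Q4 then c34 x else c5 x)" for x
  have col_eq: "\<And>x. x \<in> Q1 \<union> Q2 \<Longrightarrow> col x = c12 x" "\<And>x. x \<in> R2 \<union> R3 \<Longrightarrow> col x = c23 x"
    "\<And>x. x \<in> Q3 \<union> Q4 \<Longrightarrow> col x = c34 x" "\<And>x. x \<in> Q5 \<Longrightarrow> col x = c5 x"
    unfolding col_def using disjoint by auto
  have col: "bij_betw col Q1 C1" "bij_betw col Q2 C2" "bij_betw col Q3 C3" "bij_betw col Q4 C4"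
    "bij_betw col Q5 C5" "bij_betw col R2 D2" "bij_betw col R3 D3"
    using c12(1,2) c23(1,2) c34(1,2) c5
    by (auto intro: bij_betw_cong[THEN iffD1, rotated] simp: col_eq)
  have "properly_coloured_between E col Q1 Q2" "properly_coloured_between E col Q3 Q4"
    "properly_coloured_between E col R2 R3"
    using c12(3) c23(3) c34(3) properly_coloured_between_cong[of _ _ col] col_eq by blast+
  moreover have "col ` V \<subseteq> {..<k}"
    using range col unfolding parts by (simp add: image_Un bij_betw_imp_surj_on)
  ultimately have "proper_colouring V E k col"
    using col disjoint_sets
    by (intro proper_colouringI) (simp_all add: image_Un bij_betw_imp_surj_on bij_betw_imp_inj_on)
  then show thesis ..
qed

lemma matchings_with_clique_bounds:
  assumes bound: "\<And>K. K \<subseteq> V \<Longrightarrow> is_clique E K \<Longrightarrow> card K \<le> w"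
  obtains M1 \<mu>1 M2 \<mu>2 M3 \<mu>3 where
    "nonedge_matching E Q1 Q2 M1 \<mu>1" "nonedge_matching E R2 R3 M2 \<mu>2"
    "nonedge_matching E Q3 Q4 M3 \<mu>3"
    "card Q5 + card Q1 \<le> w" "card Q5 + card Q4 \<le> w"
    "card Q1 + card Q2 + card R2 \<le> w + card M1"
    "card Q2 + card R2 + card R3 + card Q3 \<le> w + card M2"
    "card R3 + card Q3 + card Q4 \<le> w + card M3"
proof -
  note fin = finite_parts
  have clique_Q23: "is_clique E (Q2 \<union> Q3)"
    by (rule is_clique_Un[OF symp_E cliques(2,3) complete(4)])
  obtain M1 \<mu>1 where M1: "nonedge_matching E Q1 Q2 M1 \<mu>1"
    "card Q1 + card Q2 + card R2 \<le> w + card M1"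
    by (rule koenig_matching_bound[OF symp_E fin(1,2) cliques(1,2) graded(1) fin(6) cliques(6)
          _ _ _ bound])
      (use complete(2) disjoint(5,10) in \<open>auto simp: complete_to_def parts\<close>)
  obtain M2 \<mu>2 where M2: "nonedge_matching E R2 R3 M2 \<mu>2"
    "card R2 + card R3 + card (Q2 \<union> Q3) \<le> w + card M2"
  proof (rule koenig_matching_bound[OF symp_E fin(6,7) cliques(6,7) graded(3) _ clique_Q23
        _ _ _ bound])
    show "complete_to E (Q2 \<union> Q3) (R2 \<union> R3)"
      using complete(2,3) symp_E unfolding complete_to_def symp_def by blast
  qed (use fin disjoint(10,11,14,15) in \<open>auto simp: parts\<close>)
  obtain M3 \<mu>3 where M3: "nonedge_matching E Q3 Q4 M3 \<mu>3"
    "card Q3 + card Q4 + card R3 \<le> w + card M3"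
    by (rule koenig_matching_bound[OF symp_E fin(3,4) cliques(3,4) graded(2) fin(7) cliques(7)
          _ _ _ bound])
      (use complete(3) disjoint(15,18) in \<open>auto simp: complete_to_def parts\<close>)
  have "card Q5 + card Q1 \<le> w"
    by (rule card_Un_le_clique_bound[OF symp_E fin(5,1) _ cliques(5,1) _ _ bound])
      (use complete(1) disjoint(4) in \<open>auto simp: complete_to_def parts\<close>)
  moreover have "card Q5 + card Q4 \<le> w"
    by (rule card_Un_le_clique_bound[OF symp_E fin(5,4) _ cliques(5,4) _ _ bound])
      (use complete(1) disjoint(16) in \<open>auto simp: complete_to_def parts\<close>)
  moreover have "card (Q2 \<union> Q3) = card Q2 + card Q3"
    using card_Un_disjoint[OF fin(2,3) disjoint(7)] .
  ultimately show thesis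
    using that[OF M1(1) M2(1) M3(1)] M1(2) M2(2) M3(2) by simp
qed

lemma exists_proper_colouring:
  assumes "\<And>K. K \<subseteq> V \<Longrightarrow> is_clique E K \<Longrightarrow> card K \<le> w" and "5 * w \<le> 4 * k"
  obtains col where "proper_colouring V E k col"
proof -
  obtain M1 \<mu>1 M2 \<mu>2 M3 \<mu>3 where M: "nonedge_matching E Q1 Q2 M1 \<mu>1"
    "nonedge_matching E R2 R3 M2 \<mu>2" "nonedge_matching E Q3 Q4 M3 \<mu>3"
    and bounds: "card Q5 + card Q1 \<le> w" "card Q5 + card Q4 \<le> w"
    "card Q1 + card Q2 + card R2 \<le> w + card M1"
    "card Q2 + card R2 + card R3 + card Q3 \<le> w + card M2"
    "card R3 + card Q3 + card Q4 \<le> w + card M3"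
    using matchings_with_clique_bounds[OF assms(1)] by blast
  show thesis
    using cyclic_colour_sets[OF assms(2) bounds
        nonedge_matching_card_le[OF M(1) finite_parts(1,2)]
        nonedge_matching_card_le[OF M(2) finite_parts(6,7)]
        nonedge_matching_card_le[OF M(3) finite_parts(3,4)]]
      proper_colouring_from_colour_sets[OF M] that
    by metis
qed

end

theorem theorem5p13:
  fixes V :: "'a set" and E :: "'a \<Rightarrow> 'a \<Rightarrow> bool"
  assumes "simple_graph V E"
    and "is_band V E"
  shows "int (chromatic_number V E) \<le> \<lceil>5 / 4 * real (clique_number V E)\<rceil>"
proof -
  define w where "w = clique_number V E"
  define k where "k = nat \<lceil>5 / 4 * real w\<rceil>"
  have k: "int k = \<lceil>5 / 4 * real w\<rceil>"
    unfolding k_def by simp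
  then have "5 / 4 * real w \<le> real k"
    by (metis le_of_int_ceiling of_int_of_nat_eq)
  then have "5 * w \<le> 4 * k"
    by linarith
  moreover obtain Q1 Q2 Q3 Q4 Q5 R2 R3 where "band V E Q1 Q2 Q3 Q4 Q5 R2 R3"
    using is_bandE[OF assms] .
  moreover have "\<And>K. K \<subseteq> V \<Longrightarrow> is_clique E K \<Longrightarrow> card K \<le> w"
    using assms(1) card_le_clique_number unfolding simple_graph_def w_def by blast
  ultimately obtain col where "proper_colouring V E k col"
    using band.exists_proper_colouring by metis
  then show ?thesis
    using chromatic_number_le k unfolding w_def by fastforce
qed

end
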